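(* Let $C$ be a linear code over $\mathbb{F}_q$ of dimension $k$ with weight hierarchy $(d_1,\dots,d_k)$. Assume that there exists an integer $\alpha$ such that \[ d_i = \alpha\,\frac{q^i-1}{q^{i-1}(q-1)} \quad \text{for all } 1\leqslant i\leqslant k. \] Then $C$ is a constant weight code, and all its non-zero codewords have weight $\alpha$.
   Context: For a subcode $D \subseteq C \subseteq \mathbb{F}_q^n$ (a linear subspace), $\mathrm{Supp}(D)=\{x\in\{1,\dots,n\} : \exists d\in D,\ d_x\neq 0\}$ and $w(D)=\#\mathrm{Supp}(D)$; the weight of a codeword is the weight of the subcode it spans. For $1\leqslant r\leqslant k$, $d_r=\min\{w(D) : D\subseteq C \text{ a subcode of dimension } r\}$, and $(d_1,\dots,d_k)$ is the weight hierarchy. A constant weight code is a code all of whose non-zero codewords have the same weight. *)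

theory Defs
  imports "HOL-Analysis.Analysis"
begin

text \<open>Words of length n over the field 'a are vectors of type 'a^'n (n = CARD('n));
  subcodes are subspaces w.r.t. scalar multiplication (*s), dimension is vec.dim.\<close>

definition code_supp :: "('a::field ^ 'n) set \<Rightarrow> 'n set" where
  "code_supp D = {x. \<exists>d\<in>D. d $ x \<noteq> 0}"

definition code_wt :: "('a::field ^ 'n) set \<Rightarrow> nat" where
  "code_wt D = card (code_supp D)"

definition word_wt :: "'a::field ^ 'n \<Rightarrow> nat" where
  "word_wt c = code_wt (vec.span {c})"

definition gen_hamming_wt :: "('a::field ^ 'n) set \<Rightarrow> nat \<Rightarrow> nat" where
  "gen_hamming_wt C r =
     Min {code_wt D | D. D \<subseteq> C \<and> vec.subspace D \<and> vec.dim D = r}"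

end

theory Submission imports Defs begin

text \<open>Every coordinate in the support of a code \<open>C\<close> of dimension \<open>k\<close> vanishes on a hyperplane
  of \<open>C\<close>, so double counting gives \<open>\<Sum>c\<in>C. wt c = w(C) q\<^sup>k\<^sup>-\<^sup>1(q - 1)\<close>. With \<open>w(C) = d\<^sub>k\<close>
  this sum equals \<open>\<alpha>(q\<^sup>k - 1)\<close>, i.e. the average weight of the \<open>q\<^sup>k - 1\<close> non-zero codewords
  is \<open>\<alpha>\<close>. As \<open>\<alpha> = d\<^sub>1\<close> is also the minimum weight, every non-zero codeword has weight \<open>\<alpha>\<close>.\<close>

lemma card_span_insert_subspace:
  fixes S :: "('a::{field,finite} ^ 'n) set"
  assumes S: "vec.subspace S" and b: "b \<notin> S"
  shows "card (vec.span (insert b S)) = CARD('a) * card S"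
proof -
  have span_S: "vec.span S = S" using S vec.span_eq_iff by blast
  have span_eq: "vec.span (insert b S) = (\<lambda>(t, y). t *s b + y) ` (UNIV \<times> S)"
  proof
    show "vec.span (insert b S) \<subseteq> (\<lambda>(t, y). t *s b + y) ` (UNIV \<times> S)"
    proof
      fix x assume "x \<in> vec.span (insert b S)"
      then obtain t where "x - t *s b \<in> S" using vec.span_insert span_S by blast
      then show "x \<in> (\<lambda>(t, y). t *s b + y) ` (UNIV \<times> S)"
        by (intro image_eqI[of _ _ "(t, x - t *s b)"]) auto
    qed
  next
    show "(\<lambda>(t, y). t *s b + y) ` (UNIV \<times> S) \<subseteq> vec.span (insert b S)"
      unfolding vec.span_insert span_S by (auto, rule_tac x=a in exI, simp)
  qed
  have inj: "inj_on (\<lambda>(t, y). t *s b + y) (UNIV \<times> S)"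
  proof (rule inj_onI, clarify)
    fix t y t' y' assume y: "y \<in> S" "y' \<in> S" and eq: "t *s b + y = t' *s b + y'"
    have diff: "(t - t') *s b = y' - y" using eq
      by (metis add_diff_cancel_left add_diff_cancel_right vec.scale_left_diff_distrib)
    have "t = t'"
    proof (rule ccontr)
      assume "t \<noteq> t'"
      then have "inverse (t - t') *s ((t - t') *s b) = b" by (simp only: vec.scale_scale, simp)
      then have "b = inverse (t - t') *s (y' - y)" using diff by metis
      also have "\<dots> \<in> S" using S y vec.subspace_diff vec.subspace_scale by blast
      finally show False using b by simp
    qed
    then show "t = t' \<and> y = y'" using eq by simp
  qed
  show ?thesis unfolding span_eq card_image[OF inj] card_cartesian_product by simp
qed

lemma card_span_independent:
  fixes B :: "('a::{field,finite} ^ 'n) set"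
  assumes "finite B" "vec.independent B"
  shows "card (vec.span B) = CARD('a) ^ card B"
  using assms
proof (induction B rule: finite_induct)
  case empty
  then show ?case by simp
next
  case (insert b B)
  then have "vec.independent B" and "b \<notin> vec.span B"
    using vec.independent_insert by metis+
  have "vec.span (insert b B) = vec.span (insert b (vec.span B))"
    by (simp only: vec.span_insert vec.span_span)
  then have "card (vec.span (insert b B)) = CARD('a) * card (vec.span B)"
    using card_span_insert_subspace[OF vec.subspace_span \<open>b \<notin> vec.span B\<close>] by simp
  then show ?case using insert \<open>vec.independent B\<close> by simp
qed

lemma card_subspace:
  fixes C :: "('a::{field,finite} ^ 'n) set"
  assumes "vec.subspace C"
  shows "card C = CARD('a) ^ vec.dim C"
proof -
  obtain B where B: "B \<subseteq> C" "vec.independent B" "C \<subseteq> vec.span B" "card B = vec.dim C"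
    using vec.basis_exists by blast
  then have "vec.span B = C" using assms vec.span_minimal by blast
  then show ?thesis using card_span_independent[OF _ B(2)] B(4) by simp
qed

lemma word_wt_eq_card: "word_wt c = card {x. c $ x \<noteq> 0}"
proof -
  have "code_supp (vec.span {c}) = {x. c $ x \<noteq> 0}"
    unfolding code_supp_def vec.span_singleton
    by (auto intro!: bexI[of _ "1 *s c"])
  then show ?thesis unfolding word_wt_def code_wt_def by simp
qed

lemma card_coordinate_kernel:
  fixes C :: "('a::{field,finite} ^ 'n) set"
  assumes C: "vec.subspace C" and x: "x \<in> code_supp C"
  shows "CARD('a) * card {c\<in>C. c $ x = 0} = card C"
proof -
  obtain d where d: "d \<in> C" "d $ x \<noteq> 0" using x unfolding code_supp_def by blast
  define e where "e = inverse (d $ x) *s d"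
  have e: "e \<in> C" "e $ x = 1" using d C vec.subspace_scale unfolding e_def by auto
  define K where "K = {c\<in>C. c $ x = 0}"
  have K: "vec.subspace K" using C unfolding K_def vec.subspace_def by auto
  have span_eq: "vec.span (insert e K) = C"
  proof
    show "vec.span (insert e K) \<subseteq> C"
      using e(1) C by (intro vec.span_minimal) (auto simp: K_def)
  next
    show "C \<subseteq> vec.span (insert e K)"
    proof
      fix c assume c: "c \<in> C"
      have "c - (c $ x) *s e \<in> K"
        unfolding K_def using c e vec.subspace_scale[OF C e(1)] vec.subspace_diff[OF C c] by auto
      then show "c \<in> vec.span (insert e K)"
        unfolding vec.span_insert vec.span_eq_iff[THEN iffD2, OF K] by blast
    qed
  qed
  have "e \<notin> K" using e unfolding K_def by auto
  then have "card (vec.span (insert e K)) = CARD('a) * card K"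
    by (rule card_span_insert_subspace[OF K])
  with span_eq show ?thesis unfolding K_def by simp
qed

lemma sum_word_wt:
  fixes C :: "('a::{field,finite} ^ 'n) set"
  assumes C: "vec.subspace C"
  shows "CARD('a) * (\<Sum>c\<in>C. word_wt c) = (CARD('a) - 1) * card C * code_wt C"
proof -
  have "(\<Sum>c\<in>C. word_wt c) = (\<Sum>c\<in>C. \<Sum>x\<in>UNIV. if c $ x \<noteq> 0 then 1 else 0)"
    unfolding word_wt_eq_card by (simp add: sum.If_cases)
  also have "\<dots> = (\<Sum>x\<in>UNIV. card {c\<in>C. c $ x \<noteq> 0})"
    by (subst sum.swap) (simp add: sum.If_cases Collect_conj_eq Int_commute)
  also have "\<dots> = (\<Sum>x\<in>code_supp C. card {c\<in>C. c $ x \<noteq> 0})"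
    by (rule sum.mono_neutral_right) (auto simp: code_supp_def)
  finally have "CARD('a) * (\<Sum>c\<in>C. word_wt c)
      = (\<Sum>x\<in>code_supp C. CARD('a) * card {c\<in>C. c $ x \<noteq> 0})"
    by (simp add: sum_distrib_left)
  also have "\<dots> = (\<Sum>x\<in>code_supp C. (CARD('a) - 1) * card C)"
  proof (rule sum.cong[OF refl])
    fix x assume x: "x \<in> code_supp C"
    have "{c\<in>C. c $ x \<noteq> 0} = C - {c\<in>C. c $ x = 0}" by auto
    then have "CARD('a) * card {c\<in>C. c $ x \<noteq> 0} = CARD('a) * card C - card C"
      using card_coordinate_kernel[OF C x] by (simp add: card_Diff_subset right_diff_distrib')
    then show "CARD('a) * card {c\<in>C. c $ x \<noteq> 0} = (CARD('a) - 1) * card C"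
      by (simp add: left_diff_distrib')
  qed
  also have "\<dots> = code_wt C * ((CARD('a) - 1) * card C)"
    unfolding code_wt_def by simp
  finally show ?thesis by (simp add: mult_ac)
qed

lemma sum_nonzero_word_wt:
  fixes C :: "('a::{field,finite} ^ 'n) set"
  assumes C: "vec.subspace C"
  shows "real CARD('a) * (\<Sum>c\<in>C - {0}. real (word_wt c))
    = (real CARD('a) - 1) * real CARD('a) ^ vec.dim C * real (code_wt C)"
proof -
  have "(\<Sum>c\<in>C. word_wt c) = (\<Sum>c\<in>C - {0}. word_wt c)"
    by (rule sum.mono_neutral_right) (auto simp: word_wt_eq_card)
  moreover have "1 \<le> CARD('a)" by (simp add: Suc_le_eq)
  ultimately show ?thesis
    using arg_cong[OF sum_word_wt[OF C], of real] card_subspace[OF C]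
    by (simp add: of_nat_diff flip: of_nat_sum)
qed

lemma two_le_card_field: "2 \<le> CARD('a::{field,finite})"
proof -
  have "card {0::'a, 1} \<le> CARD('a)" by (rule card_mono) auto
  then show ?thesis by simp
qed

lemma gen_hamming_wt_1_le_word_wt:
  fixes C :: "('a::{field,finite} ^ 'n) set"
  assumes C: "vec.subspace C" and c: "c \<in> C" "c \<noteq> 0"
  shows "gen_hamming_wt C 1 \<le> word_wt c"
proof -
  have "vec.dim (vec.span {c}) = 1"
    using c by (simp add: vec.dim_span vec.dim_eq_card_independent vec.independent_insert)
  then have "word_wt c \<in> {code_wt D | D. D \<subseteq> C \<and> vec.subspace D \<and> vec.dim D = 1}"
    unfolding word_wt_def using c vec.span_minimal[OF _ C] vec.subspace_span by blast
  moreover have "finite {code_wt D | D. D \<subseteq> C \<and> vec.subspace D \<and> vec.dim D = 1}"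
    by (rule finite_subset[of _ "range code_wt"]) auto
  ultimately show ?thesis unfolding gen_hamming_wt_def by (rule Min_le[rotated])
qed

lemma gen_hamming_wt_dim:
  fixes C :: "('a::{field,finite} ^ 'n) set"
  assumes C: "vec.subspace C"
  shows "gen_hamming_wt C (vec.dim C) = code_wt C"
proof -
  have "{code_wt D | D. D \<subseteq> C \<and> vec.subspace D \<and> vec.dim D = vec.dim C} = {code_wt C}"
    using vec.subspace_dim_equal[OF _ C] C by (auto intro!: exI[of _ C]; metis order_refl)
  then show ?thesis unfolding gen_hamming_wt_def by simp
qed

lemma sum_eq_card_mult_lower_bound:
  fixes f :: "'a \<Rightarrow> 'b::linordered_idom"
  assumes "finite A" "\<And>a. a \<in> A \<Longrightarrow> m \<le> f a" "sum f A = of_nat (card A) * m" "a \<in> A"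
  shows "f a = m"
proof -
  have nonneg: "\<And>a. a \<in> A \<Longrightarrow> 0 \<le> f a - m" using assms(2) by simp
  have "(\<Sum>a\<in>A. f a - m) = sum f A - of_nat (card A) * m"
    by (simp only: sum_subtractf sum_constant)
  then have "(\<Sum>a\<in>A. f a - m) = 0" using assms(3) by simp
  then have "\<forall>a\<in>A. f a - m = 0"
    using sum_nonneg_eq_0_iff[of A "\<lambda>a. f a - m"] assms(1) nonneg by simp
  then show ?thesis using assms(4) by simp
qed

theorem corollary2:
  fixes C :: "('a::{field,finite} ^ 'n) set" and k :: nat and \<alpha> :: int
  assumes "vec.subspace C"
    and "vec.dim C = k"
    and "\<forall>i\<in>{1..k}. real (gen_hamming_wt C i) =
            of_int \<alpha> * (real CARD('a) ^ i - 1) / (real CARD('a) ^ (i - 1) * (real CARD('a) - 1))"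
  shows "\<forall>c\<in>C. c \<noteq> 0 \<longrightarrow> int (word_wt c) = \<alpha>"
proof (intro ballI impI)
  fix c assume c: "c \<in> C" "c \<noteq> 0"
  define q where "q = real CARD('a)"
  have q: "q \<ge> 2" unfolding q_def using two_le_card_field[where 'a='a] by simp
  have "card {c} \<le> k"
    using vec.independent_card_le_dim[of "{c}" C] c assms(2) by (simp add: vec.independent_insert)
  then have "k \<noteq> 0" by simp
  have hyp: "real (gen_hamming_wt C i) = of_int \<alpha> * (q ^ i - 1) / (q ^ (i - 1) * (q - 1))"
    if "1 \<le> i" "i \<le> k" for i
    using assms(3) that unfolding q_def by auto
  have d1: "real (gen_hamming_wt C 1) = of_int \<alpha>"
    using hyp[of 1] \<open>k \<noteq> 0\<close> q by simp
  have dk: "real (code_wt C) * (q ^ (k - 1) * (q - 1)) = of_int \<alpha> * (q ^ k - 1)"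
    using hyp[of k] \<open>k \<noteq> 0\<close> q gen_hamming_wt_dim[OF assms(1)] unfolding assms(2)
    by (simp add: field_simps)
  have "0 \<in> C" using assms(1) vec.subspace_0 by blast
  have card_C: "real (card C) = q ^ k"
    using card_subspace[OF assms(1)] assms(2) unfolding q_def by simp
  moreover have "0 < card C" using \<open>0 \<in> C\<close> by (auto simp: card_gt_0_iff)
  ultimately have card_nonzero: "real (card (C - {0})) = q ^ k - 1"
    using \<open>0 \<in> C\<close> by (simp add: of_nat_diff)
  have lower_bound: "of_int \<alpha> \<le> real (word_wt c')" if "c' \<in> C - {0}" for c'
    unfolding d1[symmetric] using gen_hamming_wt_1_le_word_wt[OF assms(1), of c'] that by simp
  have "q * (\<Sum>c\<in>C - {0}. real (word_wt c)) = (q - 1) * q ^ k * real (code_wt C)"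
    using sum_nonzero_word_wt[OF assms(1)] unfolding assms(2) q_def .
  also have "\<dots> = q * (real (code_wt C) * (q ^ (k - 1) * (q - 1)))"
    using \<open>k \<noteq> 0\<close> by (cases k) (simp_all add: algebra_simps)
  also have "\<dots> = q * (real (card (C - {0})) * of_int \<alpha>)"
    unfolding dk card_nonzero by simp
  finally have average: "(\<Sum>c\<in>C - {0}. real (word_wt c)) = real (card (C - {0})) * of_int \<alpha>"
    using q by simp
  have "real (word_wt c) = of_int \<alpha>"
    using sum_eq_card_mult_lower_bound[OF finite lower_bound average, of c] c by simp
  then show "int (word_wt c) = \<alpha>" by linarith
qed

end
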